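(* Let $p\geq 0$ and let $G$ be a nearly balanced bipartite graph of order $2n-1$. Then $G$ is $2p$-Hamilton-biconnected if and only if $cl_{n+p+1}(G)$ is $2p$-Hamilton-biconnected.
   Context: A bipartite graph $G=(X,Y;E)$ is nearly balanced if $|X|=|Y|+1$; it is Hamilton-biconnected if for any two distinct $u,v\in X$ there is a Hamiltonian path with ends $u,v$. A vertex set $W$ is balanced if $|W\cap X|=|W\cap Y|$; $G$ is $2p$-Hamilton-biconnected if for every balanced $W$ with $|W|=2p$, the subgraph induced by $V(G)\setminus W$ is Hamilton-biconnected. For an integer $r$, the $r$-biclosure $cl_r(G)$ of a bipartite graph $G=(X,Y;E)$ is the unique smallest bipartite graph $H$ on the same vertex set with the same bipartition such that $G\subseteq H$ and $d_H(x)+d_H(y)<r$ for every non-adjacent pair $x\in X$, $y\in Y$; it is obtained from $G$ by repeatedly joining non-adjacent $x\in X$, $y\in Y$ with degree sum at least $r$ until no such pair remains. *)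

theory Defs
  imports Main
begin

definition bipartite :: "'a set \<Rightarrow> 'a set \<Rightarrow> ('a \<times> 'a) set \<Rightarrow> bool" where
  "bipartite X Y E \<longleftrightarrow> finite X \<and> finite Y \<and> X \<inter> Y = {} \<and> E \<subseteq> X \<times> Y"

definition nearly_balanced :: "'a set \<Rightarrow> 'a set \<Rightarrow> bool" where
  "nearly_balanced X Y \<longleftrightarrow> card X = card Y + 1"

definition adj :: "('a \<times> 'a) set \<Rightarrow> 'a \<Rightarrow> 'a \<Rightarrow> bool" where
  "adj E a b \<longleftrightarrow> (a, b) \<in> E \<or> (b, a) \<in> E"

definition ham_path :: "('a \<times> 'a) set \<Rightarrow> 'a set \<Rightarrow> 'a \<Rightarrow> 'a \<Rightarrow> bool" where
  "ham_path E V u v \<longleftrightarrow> (\<exists>ps. ps \<noteq> [] \<and> distinct ps \<and> set ps = V \<and> hd ps = u \<and> last ps = v \<and>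
      (\<forall>i < length ps - 1. adj E (ps ! i) (ps ! Suc i)))"

definition ham_biconnected :: "'a set \<Rightarrow> 'a set \<Rightarrow> ('a \<times> 'a) set \<Rightarrow> bool" where
  "ham_biconnected X Y E \<longleftrightarrow>
     (\<forall>u \<in> X. \<forall>v \<in> X. u \<noteq> v \<longrightarrow> ham_path (E \<inter> (X \<times> Y)) (X \<union> Y) u v)"

definition balanced :: "'a set \<Rightarrow> 'a set \<Rightarrow> 'a set \<Rightarrow> bool" where
  "balanced X Y W \<longleftrightarrow> card (W \<inter> X) = card (W \<inter> Y)"

definition p2_ham_biconnected :: "nat \<Rightarrow> 'a set \<Rightarrow> 'a set \<Rightarrow> ('a \<times> 'a) set \<Rightarrow> bool" where
  "p2_ham_biconnected p X Y E \<longleftrightarrow>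
     (\<forall>W. W \<subseteq> X \<union> Y \<and> balanced X Y W \<and> card W = 2 * p \<longrightarrow>
          ham_biconnected (X - W) (Y - W) E)"

definition biclosure_step :: "nat \<Rightarrow> 'a set \<Rightarrow> 'a set \<Rightarrow> ('a \<times> 'a) set \<Rightarrow> ('a \<times> 'a) set \<Rightarrow> ('a \<times> 'a) set" where
  "biclosure_step r X Y E S = E \<union> {(x, y). x \<in> X \<and> y \<in> Y \<and>
      card {y' \<in> Y. (x, y') \<in> S} + card {x' \<in> X. (x', y) \<in> S} \<ge> r}"

text \<open>The r-biclosure: the smallest edge set H containing E such that every non-adjacent
  pair x in X, y in Y has degree sum < r in H (least fixed point).\<close>
definition biclosure :: "nat \<Rightarrow> 'a set \<Rightarrow> 'a set \<Rightarrow> ('a \<times> 'a) set \<Rightarrow> ('a \<times> 'a) set" where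
  "biclosure r X Y E = lfp (biclosure_step r X Y E)"

end

theory Submission
  imports Defs
begin

text \<open>Adding edges preserves the property, so only the converse needs work, and it suffices to
  undo one closure edge x0 y0 at a time, where d(x0) + d(y0) \<ge> n + p + 1 = |Y| + p + 2.
  After deleting a balanced set of 2p vertices the degree sum is still at least |Y'| + 2.
  Take a Hamiltonian path P = P(0) ... P(m) between two vertices of X' that uses x0 y0.
  The positions j with x0 adjacent to P(j), and those with P(j+1) adjacent to y0, all lie among
  the |Y'| odd positions of P, and together they number at least |Y'| + 1, so some j is of both
  kinds. Reversing the segment of P strictly between this crossing pair and x0 y0 yields a
  Hamiltonian path with the same ends avoiding x0 y0 (the rotation argument of Bondy and
  Chvatal).\<close>

lemma adj_commute: "adj E a b \<longleftrightarrow> adj E b a"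
  unfolding adj_def by blast

lemma ham_path_iff_successively:
  "ham_path E V u v \<longleftrightarrow>
     (\<exists>ps. ps \<noteq> [] \<and> distinct ps \<and> set ps = V \<and> hd ps = u \<and> last ps = v \<and> successively (adj E) ps)"
  unfolding ham_path_def successively_conv_nth by (simp add: less_diff_conv)

lemma successively_adj_rev: "successively (adj E) (rev ps) \<longleftrightarrow> successively (adj E) ps"
  by (simp add: adj_commute)

lemma ham_path_commute: "ham_path E V u v \<Longrightarrow> ham_path E V v u"
  unfolding ham_path_iff_successively
  by (metis distinct_rev hd_rev last_rev rev_is_Nil_conv set_rev successively_adj_rev)

lemma ham_path_mono: "ham_path E V u v \<Longrightarrow> E \<subseteq> E' \<Longrightarrow> ham_path E' V u v"
  unfolding ham_path_def adj_def by blast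

lemma successively_adj_insert_notin:
  assumes "successively (adj (insert (a, b) F)) ps" and "a \<notin> set ps \<or> b \<notin> set ps"
  shows "successively (adj F) ps"
  using assms by (elim successively_mono) (auto simp: adj_def)

lemma successively_adj_insert_split:
  assumes "successively (adj (insert (a, b) F)) ps" and "\<not> successively (adj F) ps"
  shows "\<exists>L R. ps = L @ R \<and> L \<noteq> [] \<and> R \<noteq> [] \<and> (last L = a \<and> hd R = b \<or> last L = b \<and> hd R = a)"
  using assms
proof (induction ps rule: induct_list012)
  case (3 x y xs)
  show ?case
  proof (cases "successively (adj F) (y # xs)")
    case True
    then have "\<not> adj F x y" using "3.prems"(2) by simp
    with "3.prems"(1) have "x = a \<and> y = b \<or> x = b \<and> y = a" by (auto simp: adj_def)
    then show ?thesis by (intro exI[of _ "[x]"] exI[of _ "y # xs"]) auto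
  next
    case False
    then obtain L R where "y # xs = L @ R" "L \<noteq> []" "R \<noteq> []"
        "last L = a \<and> hd R = b \<or> last L = b \<and> hd R = a"
      using "3.IH"(2) "3.prems"(1) by auto
    then show ?thesis by (intro exI[of _ "x # L"] exI[of _ R]) auto
  qed
qed simp_all

lemma successively_adj_reverse_middle:
  assumes "successively (adj F) A" "successively (adj F) B" "successively (adj F) C"
    and "A \<noteq> []" "B \<noteq> []" "C \<noteq> []"
    and "adj F (last A) (last B)" "adj F (hd B) (hd C)"
  shows "successively (adj F) (A @ rev B @ C)"
  using assms by (simp add: successively_append_iff successively_adj_rev hd_rev last_rev del: successively_rev)

lemma successively_adj_nth_in_iff_even:
  assumes "G \<subseteq> X \<times> Y" "X \<inter> Y = {}" "successively (adj G) ps" "hd ps \<in> X"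
  shows "i < length ps \<Longrightarrow> ps ! i \<in> X \<longleftrightarrow> even i"
proof (induction i)
  case 0
  then show ?case using assms(4) by (simp add: hd_conv_nth)
next
  case (Suc i)
  have "adj G (ps ! i) (ps ! Suc i)" using assms(3) Suc.prems by (rule successively_nth)
  then show ?case using Suc assms(1,2) by (auto simp: adj_def)
qed

lemma card_nth_positions:
  assumes "distinct xs"
  shows "card {i. i < length xs \<and> P (xs ! i)} = card {x \<in> set xs. P x}"
proof -
  have "{x \<in> set xs. P x} = nth xs ` {i. i < length xs \<and> P (xs ! i)}"
    by (auto simp: in_set_conv_nth)
  moreover have "inj_on (nth xs) {i. i < length xs \<and> P (xs ! i)}"
    using assms by (simp add: inj_on_nth)
  ultimately show ?thesis by (simp add: card_image)
qed

lemma ex_crossing_position: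
  assumes dj: "X \<inter> Y = {}" and F: "F \<subseteq> X \<times> Y"
    and ps: "distinct ps" "set ps = X \<union> Y"
    and parity: "\<And>i. i < length ps \<Longrightarrow> ps ! i \<in> X \<longleftrightarrow> even i"
    and deg: "card {y \<in> Y. (x0, y) \<in> F} + card {x \<in> X. (x, y0) \<in> F} \<ge> card Y + 2"
  shows "\<exists>j. Suc j < length ps \<and> (x0, ps ! j) \<in> F \<and> (ps ! Suc j, y0) \<in> F"
proof -
  define m where "m = length ps"
  define Ys where "Ys = {i. i < m \<and> ps ! i \<in> Y}"
  define A where "A = {i. i < m \<and> (x0, ps ! i) \<in> F}"
  define B where "B = {j. Suc j < m \<and> (ps ! Suc j, y0) \<in> F}"
  have fin: "finite Ys" by (simp add: Ys_def)
  have finB: "finite B" by (rule finite_subset[of _ "{..<m}"]) (auto simp: B_def)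
  have "card Ys = card {x \<in> set ps. x \<in> Y}"
    unfolding Ys_def m_def by (rule card_nth_positions[OF ps(1)])
  also have "{x \<in> set ps. x \<in> Y} = Y" using ps(2) by auto
  finally have cYs: "card Ys = card Y" .
  have cA: "card A = card {y \<in> Y. (x0, y) \<in> F}"
  proof -
    have "card A = card {x \<in> set ps. (x0, x) \<in> F}"
      unfolding A_def m_def by (rule card_nth_positions[OF ps(1)])
    also have "{x \<in> set ps. (x0, x) \<in> F} = {y \<in> Y. (x0, y) \<in> F}" using F ps(2) by auto
    finally show ?thesis .
  qed
  have cB: "card {x \<in> X. (x, y0) \<in> F} \<le> card B + 1"
  proof -
    have "{x \<in> X. (x, y0) \<in> F} = {x \<in> set ps. (x, y0) \<in> F}" using F ps(2) by auto
    also have "card \<dots> = card {i. i < m \<and> (ps ! i, y0) \<in> F}"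
      unfolding m_def by (rule card_nth_positions[OF ps(1), symmetric])
    also have "\<dots> \<le> card (insert 0 (Suc ` B))"
    proof (rule card_mono)
      show "finite (insert 0 (Suc ` B))" using finB by simp
      show "{i. i < m \<and> (ps ! i, y0) \<in> F} \<subseteq> insert 0 (Suc ` B)"
        by (auto simp: B_def image_iff) (metis Suc_pred neq0_conv)
    qed
    also have "\<dots> \<le> card (Suc ` B) + 1"
      using finB by (simp add: card_insert_if)
    also have "card (Suc ` B) = card B" by (simp add: card_image)
    finally show ?thesis .
  qed
  have AB: "A \<union> B \<subseteq> Ys"
  proof
    fix j assume "j \<in> A \<union> B"
    then show "j \<in> Ys"
    proof
      assume "j \<in> A" then show ?thesis using F by (auto simp: A_def Ys_def)
    next
      assume j: "j \<in> B"
      then have "ps ! Suc j \<in> X" and "j < m" using F by (auto simp: B_def)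
      then have "ps ! j \<notin> X" using parity j by (auto simp: B_def m_def)
      moreover have "ps ! j \<in> X \<union> Y" using \<open>j < m\<close> ps(2) m_def by (metis nth_mem)
      ultimately show ?thesis using \<open>j < m\<close> by (auto simp: Ys_def)
    qed
  qed
  have "card A + card B = card (A \<union> B) + card (A \<inter> B)"
    using finB by (intro card_Un_Int) (simp_all add: A_def)
  moreover have "card (A \<union> B) \<le> card Ys" using AB fin by (rule card_mono[rotated])
  ultimately have "card (A \<inter> B) \<noteq> 0" using deg cYs cA cB by linarith
  then have "A \<inter> B \<noteq> {}" by force
  then show ?thesis by (auto simp: A_def B_def m_def)
qed

lemma last_take_Suc: "j < length xs \<Longrightarrow> last (take (Suc j) xs) = xs ! j"
  by (simp add: take_Suc_conv_app_nth)

lemma ham_path_reroute: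
  assumes dj: "X \<inter> Y = {}" and F: "F \<subseteq> X \<times> Y"
    and x0: "x0 \<in> X" and y0: "y0 \<in> Y" and nin: "(x0, y0) \<notin> F"
    and deg: "card {y \<in> Y. (x0, y) \<in> F} + card {x \<in> X. (x, y0) \<in> F} \<ge> card Y + 2"
    and ps: "distinct (L @ R)" "set (L @ R) = X \<union> Y" "hd (L @ R) \<in> X"
      "successively (adj (insert (x0, y0) F)) (L @ R)"
    and LR: "L \<noteq> []" "R \<noteq> []" "last L = x0" "hd R = y0"
  shows "ham_path F (X \<union> Y) (hd (L @ R)) (last (L @ R))"
proof -
  define ps where "ps = L @ R"
  define k where "k = length L - 1"
  have psk: "ps ! k = x0" and psSk: "ps ! Suc k = y0" and Lk: "length L = Suc k"
    using LR by (auto simp: ps_def k_def nth_append last_conv_nth hd_conv_nth)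
  have "y0 \<notin> set L" and "x0 \<notin> set R"
    using ps(1) LR by (auto dest: last_in_set hd_in_set)
  then have L: "successively (adj F) L" and R: "successively (adj F) R"
    using ps(4) by (auto simp: successively_append_iff intro: successively_adj_insert_notin)
  have parity: "ps ! i \<in> X \<longleftrightarrow> even i" if "i < length ps" for i
    using successively_adj_nth_in_iff_even[of "insert (x0, y0) F" X Y] F x0 y0 dj ps(3,4) that
    by (simp add: ps_def)
  obtain j where j: "Suc j < length ps" "(x0, ps ! j) \<in> F" "(ps ! Suc j, y0) \<in> F"
    using ex_crossing_position[OF dj F _ _ parity deg] ps(1,2) by (auto simp: ps_def)
  have "odd j" using j(1,2) F dj parity[of j] by auto
  moreover have "even k" using psk x0 parity[of k] Lk by (simp add: ps_def)
  moreover have "j \<noteq> Suc k" using j(2) psSk nin by auto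
  ultimately have "j < k \<or> Suc k < j" by presburger
  then show ?thesis
  proof
    assume jk: "j < k"
    define A where "A = take (Suc j) L"
    define B where "B = drop (Suc j) L"
    have "L = A @ B" by (simp add: A_def B_def)
    moreover have "last A = ps ! j" "hd B = ps ! Suc j" "A \<noteq> []" "B \<noteq> []"
      using jk Lk LR(1) by (simp_all add: A_def B_def ps_def last_take_Suc hd_drop_conv_nth nth_append)
    moreover have "last B = x0" using jk Lk LR by (simp add: B_def)
    ultimately have "successively (adj F) (A @ rev B @ R)"
      using L R LR j by (intro successively_adj_reverse_middle) (auto simp: successively_append_iff adj_def)
    then show ?thesis unfolding ham_path_iff_successively using ps(1,2) LR \<open>L = A @ B\<close> \<open>A \<noteq> []\<close>
      by (intro exI[of _ "A @ rev B @ R"]) auto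
  next
    assume kj: "Suc k < j"
    define i where "i = j - Suc k"
    define B where "B = take (Suc i) R"
    define C where "C = drop (Suc i) R"
    have iR: "Suc i < length R" and ij: "j = Suc k + i" using j(1) Lk kj by (simp_all add: ps_def i_def)
    have "R = B @ C" by (simp add: B_def C_def)
    moreover have "last B = ps ! j" "hd C = ps ! Suc j" "B \<noteq> []" "C \<noteq> []"
      using iR Lk LR(2) by (simp_all add: ij B_def C_def ps_def hd_drop_conv_nth nth_append last_take_Suc)
    moreover have "hd B = y0" using LR by (simp add: B_def)
    ultimately have "successively (adj F) (L @ rev B @ C)"
      using L R LR j by (intro successively_adj_reverse_middle) (auto simp: successively_append_iff adj_def)
    then show ?thesis unfolding ham_path_iff_successively using ps(1,2) LR \<open>R = B @ C\<close> \<open>C \<noteq> []\<close>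
      by (intro exI[of _ "L @ rev B @ C"]) auto
  qed
qed

lemma ham_path_delete_edge:
  assumes dj: "X \<inter> Y = {}" and F: "F \<subseteq> X \<times> Y"
    and x0: "x0 \<in> X" and y0: "y0 \<in> Y" and nin: "(x0, y0) \<notin> F"
    and deg: "card {y \<in> Y. (x0, y) \<in> F} + card {x \<in> X. (x, y0) \<in> F} \<ge> card Y + 2"
    and ends: "u \<in> X" "v \<in> X"
    and hp: "ham_path (insert (x0, y0) F) (X \<union> Y) u v"
  shows "ham_path F (X \<union> Y) u v"
proof -
  obtain ps where ps: "ps \<noteq> []" "distinct ps" "set ps = X \<union> Y" "hd ps = u" "last ps = v"
      "successively (adj (insert (x0, y0) F)) ps"
    using hp unfolding ham_path_iff_successively by blast
  show ?thesis
  proof (cases "successively (adj F) ps")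
    case True
    then show ?thesis using ps unfolding ham_path_iff_successively by blast
  next
    case False
    then obtain L R where LR: "ps = L @ R" "L \<noteq> []" "R \<noteq> []"
        and ends_LR: "last L = x0 \<and> hd R = y0 \<or> last L = y0 \<and> hd R = x0"
      using successively_adj_insert_split[OF ps(6)] by blast
    have "x0 \<noteq> y0" using x0 y0 dj by blast
    show ?thesis
    proof (cases "last L = x0")
      case True
      then have "hd R = y0" using ends_LR \<open>x0 \<noteq> y0\<close> by simp
      then show ?thesis
        using ham_path_reroute[OF dj F x0 y0 nin deg, of L R] ps ends LR True by simp
    next
      case False
      then have "last (rev R) = x0" "hd (rev L) = y0"
        using ends_LR LR(2,3) by (auto simp: hd_rev last_rev)
      moreover have "rev ps = rev R @ rev L" using LR(1) by simp
      moreover have "distinct (rev ps)" "set (rev ps) = X \<union> Y" "hd (rev ps) \<in> X"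
        "successively (adj (insert (x0, y0) F)) (rev ps)"
        using ps ends by (simp_all add: hd_rev successively_adj_rev del: successively_rev)
      ultimately have "ham_path F (X \<union> Y) (hd (rev ps)) (last (rev ps))"
        using ham_path_reroute[OF dj F x0 y0 nin deg, of "rev R" "rev L"] LR(2,3) by simp
      then show ?thesis using ps by (simp add: hd_rev last_rev ham_path_commute)
    qed
  qed
qed

lemma balanced_card_Int:
  assumes "finite X" "finite Y" "X \<inter> Y = {}" "W \<subseteq> X \<union> Y" "balanced X Y W" "card W = 2 * p"
  shows "card (W \<inter> X) = p" "card (W \<inter> Y) = p"
proof -
  have "card W = card ((W \<inter> X) \<union> (W \<inter> Y))" using assms(4) by (metis Int_Un_distrib Int_absorb2)
  also have "\<dots> = card (W \<inter> X) + card (W \<inter> Y)" using assms(1-3) by (intro card_Un_disjoint) auto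
  finally have "card W = card (W \<inter> X) + card (W \<inter> Y)" .
  then show "card (W \<inter> X) = p" "card (W \<inter> Y) = p"
    using assms(5,6) unfolding balanced_def by simp_all
qed

lemma card_Collect_le_Diff_add:
  assumes "finite A"
  shows "card {a \<in> A. P a} \<le> card {a \<in> A - W. P a} + card (W \<inter> A)"
proof -
  have "card {a \<in> A. P a} \<le> card ({a \<in> A - W. P a} \<union> (W \<inter> A))"
    using assms by (intro card_mono) auto
  also have "\<dots> \<le> card {a \<in> A - W. P a} + card (W \<inter> A)" by (rule card_Un_le)
  finally show ?thesis .
qed

lemma p2_ham_biconnected_delete_edge:
  assumes fin: "finite X" "finite Y" and dj: "X \<inter> Y = {}"
    and x0: "x0 \<in> X" and y0: "y0 \<in> Y" and nin: "(x0, y0) \<notin> S"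
    and deg: "card {y \<in> Y. (x0, y) \<in> S} + card {x \<in> X. (x, y0) \<in> S} \<ge> card Y + p + 2"
    and hb: "p2_ham_biconnected p X Y (insert (x0, y0) S)"
  shows "p2_ham_biconnected p X Y S"
  unfolding p2_ham_biconnected_def
proof (intro allI impI)
  fix W assume W: "W \<subseteq> X \<union> Y \<and> balanced X Y W \<and> card W = 2 * p"
  define X' where "X' = X - W"
  define Y' where "Y' = Y - W"
  have cWX: "card (W \<inter> X) = p" and cWY: "card (W \<inter> Y) = p"
    using balanced_card_Int[OF fin dj] W by auto
  have cY': "card Y' + p = card Y"
    using fin(2) cWY card_mono[OF fin(2), of "W \<inter> Y"]
    by (simp add: Y'_def card_Diff_subset_Int Int_commute)
  have hb': "ham_biconnected X' Y' (insert (x0, y0) S)"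
    using hb W unfolding p2_ham_biconnected_def X'_def Y'_def by blast
  show "ham_biconnected (X - W) (Y - W) S"
    unfolding ham_biconnected_def X'_def[symmetric] Y'_def[symmetric]
  proof (intro ballI impI)
    fix u v assume uv: "u \<in> X'" "v \<in> X'" "u \<noteq> v"
    have hp: "ham_path (insert (x0, y0) S \<inter> (X' \<times> Y')) (X' \<union> Y') u v"
      using hb' uv unfolding ham_biconnected_def by blast
    show "ham_path (S \<inter> (X' \<times> Y')) (X' \<union> Y') u v"
    proof (cases "x0 \<in> X' \<and> y0 \<in> Y'")
      case False
      then have "insert (x0, y0) S \<inter> (X' \<times> Y') = S \<inter> (X' \<times> Y')" by auto
      then show ?thesis using hp by simp
    next
      case True
      have restrict: "{y \<in> Y'. (x0, y) \<in> S \<inter> (X' \<times> Y')} = {y \<in> Y - W. (x0, y) \<in> S}"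
        "{x \<in> X'. (x, y0) \<in> S \<inter> (X' \<times> Y')} = {x \<in> X - W. (x, y0) \<in> S}"
        using True by (auto simp: X'_def Y'_def)
      have "card {y \<in> Y'. (x0, y) \<in> S \<inter> (X' \<times> Y')} + card {x \<in> X'. (x, y0) \<in> S \<inter> (X' \<times> Y')}
          \<ge> card Y' + 2"
        using deg cY' cWX cWY card_Collect_le_Diff_add[OF fin(1), of "\<lambda>x. (x, y0) \<in> S" W]
          card_Collect_le_Diff_add[OF fin(2), of "\<lambda>y. (x0, y) \<in> S" W]
        unfolding restrict by linarith
      moreover have "insert (x0, y0) S \<inter> (X' \<times> Y') = insert (x0, y0) (S \<inter> (X' \<times> Y'))"
        using True by auto
      moreover have "X' \<inter> Y' = {}" using dj by (auto simp: X'_def Y'_def)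
      ultimately show ?thesis
        using ham_path_delete_edge[of X' Y' "S \<inter> (X' \<times> Y')" x0 y0] True nin uv hp by auto
    qed
  qed
qed

lemma p2_ham_biconnected_mono:
  assumes "p2_ham_biconnected p X Y E" "E \<subseteq> E'"
  shows "p2_ham_biconnected p X Y E'"
  using assms unfolding p2_ham_biconnected_def ham_biconnected_def
  by (meson Int_mono ham_path_mono order_refl)

lemma finite_lfp_downward_induct:
  assumes "S \<subseteq> lfp f" and mono: "mono f" and fin: "finite (lfp f)" and top: "P (lfp f)"
    and step: "\<And>S e. S \<subseteq> lfp f \<Longrightarrow> e \<in> f S \<Longrightarrow> e \<notin> S \<Longrightarrow> P (insert e S) \<Longrightarrow> P S"
  shows "P S"
  using assms(1)
proof (induction "card (lfp f - S)" arbitrary: S rule: less_induct)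
  case less
  show ?case
  proof (cases "lfp f \<subseteq> S")
    case True
    then show ?thesis using less.prems top by (simp add: subset_antisym)
  next
    case False
    then have "\<not> f S \<subseteq> S" using lfp_lowerbound by blast
    then obtain e where e: "e \<in> f S" "e \<notin> S" by blast
    have "e \<in> lfp f" using e(1) monoD[OF mono less.prems] lfp_fixpoint[OF mono] by blast
    then have "card (lfp f - insert e S) < card (lfp f - S)"
      using fin e(2) by (intro psubset_card_mono) auto
    then have "P (insert e S)" using less.hyps less.prems \<open>e \<in> lfp f\<close> by blast
    then show ?thesis using step less.prems e by blast
  qed
qed

lemma mono_biclosure_step:
  assumes "finite X" "finite Y"
  shows "mono (biclosure_step r X Y E)"
proof (rule monoI)
  fix S S' :: "('a \<times> 'a) set" assume "S \<subseteq> S'"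
  then have "card {y' \<in> Y. (x, y') \<in> S} \<le> card {y' \<in> Y. (x, y') \<in> S'}"
    "card {x' \<in> X. (x', y) \<in> S} \<le> card {x' \<in> X. (x', y) \<in> S'}" for x y
    using assms by (auto intro: card_mono)
  then show "biclosure_step r X Y E S \<subseteq> biclosure_step r X Y E S'"
    unfolding biclosure_step_def by (auto intro: order_trans[OF _ add_mono])
qed

lemma subset_biclosure:
  assumes "finite X" "finite Y"
  shows "E \<subseteq> biclosure r X Y E"
  using lfp_fixpoint[OF mono_biclosure_step[OF assms]]
  unfolding biclosure_def biclosure_step_def by blast

lemma biclosure_subset_Times:
  assumes "E \<subseteq> X \<times> Y"
  shows "biclosure r X Y E \<subseteq> X \<times> Y"
  unfolding biclosure_def by (rule lfp_lowerbound) (use assms in \<open>auto simp: biclosure_step_def\<close>)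

theorem lemma2p5:
  fixes X Y :: "'a set" and E :: "('a \<times> 'a) set" and n p :: nat
  assumes "bipartite X Y E"
    and "nearly_balanced X Y"
    and "card X + card Y + 1 = 2 * n"
  shows "p2_ham_biconnected p X Y E \<longleftrightarrow> p2_ham_biconnected p X Y (biclosure (n + p + 1) X Y E)"
proof -
  have fin: "finite X" "finite Y" and dj: "X \<inter> Y = {}" and EX: "E \<subseteq> X \<times> Y"
    using assms(1) unfolding bipartite_def by auto
  have threshold: "n + p + 1 = card Y + p + 2"
    using assms(2,3) unfolding nearly_balanced_def by linarith
  define f where "f = biclosure_step (n + p + 1) X Y E"
  have cl: "biclosure (n + p + 1) X Y E = lfp f" by (simp add: biclosure_def f_def)
  have mono: "mono f" unfolding f_def by (rule mono_biclosure_step[OF fin])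
  have E_cl: "E \<subseteq> lfp f" unfolding cl[symmetric] by (rule subset_biclosure[OF fin])
  have fin_cl: "finite (lfp f)"
    using biclosure_subset_Times[OF EX] fin cl by (metis finite_SigmaI finite_subset)
  show ?thesis
    unfolding cl
  proof
    assume "p2_ham_biconnected p X Y E"
    then show "p2_ham_biconnected p X Y (lfp f)" using E_cl by (rule p2_ham_biconnected_mono)
  next
    assume hb_cl: "p2_ham_biconnected p X Y (lfp f)"
    have "E \<subseteq> S \<longrightarrow> p2_ham_biconnected p X Y S" if "S \<subseteq> lfp f" for S
      using that mono fin_cl
    proof (rule finite_lfp_downward_induct)
      show "E \<subseteq> lfp f \<longrightarrow> p2_ham_biconnected p X Y (lfp f)" using hb_cl by blast
    next
      fix S e
      assume e: "e \<in> f S" "e \<notin> S" and IH: "E \<subseteq> insert e S \<longrightarrow> p2_ham_biconnected p X Y (insert e S)"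
      show "E \<subseteq> S \<longrightarrow> p2_ham_biconnected p X Y S"
      proof
        assume "E \<subseteq> S"
        with e obtain x0 y0 where "e = (x0, y0)" "x0 \<in> X" "y0 \<in> Y"
          "card {y \<in> Y. (x0, y) \<in> S} + card {x \<in> X. (x, y0) \<in> S} \<ge> card Y + p + 2"
          unfolding f_def biclosure_step_def threshold by blast
        then show "p2_ham_biconnected p X Y S"
          using p2_ham_biconnected_delete_edge[OF fin dj] IH e(2) \<open>E \<subseteq> S\<close> by blast
      qed
    qed
    then show "p2_ham_biconnected p X Y E" using E_cl by blast
  qed
qed

end
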